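(* Let $X$ be a Banach space, $C\subset X$ a $k$-solid complemented $k$-cone, and $\Phi_t$ a $C^1$ semiflow on $X$ that is strongly focusing monotone with respect to $C$, has compact derivatives $D_x\Phi_t$, and admits a flow extension on each $\omega$-limit set. Let $x\in X$ have precompact positive semiorbit, and let $X=E_z\oplus F_z$, $z\in\omega(x)$, be a $k$-exponential separation of $(\Phi_t,D\Phi_t)$ along $\omega(x)$ associated with $C$. Assume $\lambda_{kz}>0$ for every $z\in\omega(x)$. Then there exists a constant $\delta''>0$ such that $$\limsup_{t\to+\infty}\|\Phi_t(y)-\Phi_t(x)\|\ge\delta''$$ for every $y\in X$ with $y\ne x$ and $y-x\in C$.
   Context: Semiflow, $k$-cone, $k$-solid, complemented, strongly focusing monotone: $\Phi:\mathbb{R}^+\times X\to X$ continuous with $\Phi_0=\mathrm{Id}$, $\Phi_{t+s}=\Phi_t\circ\Phi_s$; $C$ closed, $\mathbb{R}C=C$, maximal dimension of contained subspaces $k$, containing a $k$-dim subspace $W$ with $W\setminus\{0\}\subset\operatorname{Int}C$, and admitting a $k$-codim subspace $H^c$ with $H^c\cap C=\{0\}$. $\Phi_t$ is strongly focusing monotone w.r.t. $C$ if it is $C^1$, strongly monotone ($x-y\in C\Rightarrow\Phi_t(x)-\Phi_t(y)\in C$; $x\neq y$, $x-y\in C$, $t>0\Rightarrow \Phi_t(x)-\Phi_t(y)\in\operatorname{Int}C$), $D_x\Phi_t(C\setminus\{0\})\subset\operatorname{Int}C$ for $t>0$, and for each compact invariant set $\Sigma$ there are $\delta,T,\kappa>0$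 such that for every $z\in\Sigma$, $x,y\in B_\delta(z)$ there is a linear $T_{x,y}$ with $T_{x,y}(y-x)=\Phi_T(y)-\Phi_T(x)$ and $\inf_{v\in T_{x,y}C,\|v\|=1}\inf_{u\in X\setminus C}\|v-u\|>\kappa$. $\omega(x)=\bigcap_{s\ge0}\overline{\bigcup_{t\ge s}\Phi_t(x)}$. A $k$-exponential separation along a compact invariant set $\Sigma$ associated with $C$ consists of a continuous $k$-dimensional bundle $z\mapsto E_z$ and a continuous $k$-codimensional closed bundle $z\mapsto F_z$ ($z\in\Sigma$) with $X=E_z\oplus F_z$, $D_z\Phi_tE_z=E_{\Phi_t(z)}$, $D_z\Phi_tF_z\subset F_{\Phi_t(z)}$ for $t>0$, constants $M>0$, $0<\gamma<1$ with $\|D_z\Phi_tw\|\le M\gamma^t\|D_z\Phi_tv\|$ for all unit $w\in F_z$, unit $v\in E_z$, $t\ge0$, and $E_z\subset\operatorname{Int}C\cup\{0\}$, $F_z\cap C=\{0\}$. The $k$-Lyapunov exponent is $\lambda_{kz}=\limsup_{t\to+\infty}\frac1t\log\inf_{v\in E_z,\|v\|=1}\|D_z\Phi_tv\|$. *)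

theory Defs
  imports "HOL-Analysis.Analysis"
begin

definition kdim_subspace :: "'a::real_normed_vector set \<Rightarrow> nat \<Rightarrow> bool" where
  "kdim_subspace W k \<longleftrightarrow> (\<exists>B. finite B \<and> independent B \<and> card B = k \<and> W = span B)"

definition kcodim_subspace :: "'a::real_normed_vector set \<Rightarrow> nat \<Rightarrow> bool" where
  "kcodim_subspace H k \<longleftrightarrow> subspace H \<and>
     (\<exists>V. kdim_subspace V k \<and> V \<inter> H = {0} \<and> (\<forall>x. \<exists>v\<in>V. \<exists>h\<in>H. x = v + h))"

definition k_cone :: "'a::real_normed_vector set \<Rightarrow> nat \<Rightarrow> bool" where
  "k_cone C k \<longleftrightarrow> closed C \<and> (\<forall>r x. x \<in> C \<longrightarrow> r *\<^sub>R x \<in> C) \<and>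
     (\<exists>W. kdim_subspace W k \<and> W \<subseteq> C) \<and>
     (\<forall>B. finite B \<and> independent B \<and> span B \<subseteq> C \<longrightarrow> card B \<le> k)"

definition k_solid :: "'a::real_normed_vector set \<Rightarrow> nat \<Rightarrow> bool" where
  "k_solid C k \<longleftrightarrow> (\<exists>W. kdim_subspace W k \<and> W - {0} \<subseteq> interior C)"

definition complemented :: "'a::real_normed_vector set \<Rightarrow> nat \<Rightarrow> bool" where
  "complemented C k \<longleftrightarrow> (\<exists>H. kcodim_subspace H k \<and> H \<inter> C = {0})"

definition semiflow :: "(real \<Rightarrow> 'a::real_normed_vector \<Rightarrow> 'a) \<Rightarrow> bool" where
  "semiflow \<Phi> \<longleftrightarrow> continuous_on ({0..} \<times> UNIV) (\<lambda>(t, x). \<Phi> t x) \<and>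
     (\<forall>x. \<Phi> 0 x = x) \<and>
     (\<forall>t s x. 0 \<le> t \<longrightarrow> 0 \<le> s \<longrightarrow> \<Phi> (t + s) x = \<Phi> t (\<Phi> s x))"

definition C1_semiflow :: "(real \<Rightarrow> 'a::real_normed_vector \<Rightarrow> 'a) \<Rightarrow> (real \<Rightarrow> 'a \<Rightarrow> 'a \<Rightarrow>\<^sub>L 'a) \<Rightarrow> bool" where
  "C1_semiflow \<Phi> D \<longleftrightarrow> (\<forall>t\<ge>0. (\<forall>x. (\<Phi> t has_derivative blinfun_apply (D t x)) (at x)) \<and>
       continuous_on UNIV (D t))"

definition invariant_set :: "(real \<Rightarrow> 'a \<Rightarrow> 'a) \<Rightarrow> 'a set \<Rightarrow> bool" where
  "invariant_set \<Phi> S \<longleftrightarrow> (\<forall>t\<ge>0. \<Phi> t ` S = S)"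

definition strongly_monotone :: "(real \<Rightarrow> 'a::real_normed_vector \<Rightarrow> 'a) \<Rightarrow> 'a set \<Rightarrow> bool" where
  "strongly_monotone \<Phi> C \<longleftrightarrow>
     (\<forall>t x y. 0 \<le> t \<longrightarrow> x - y \<in> C \<longrightarrow> \<Phi> t x - \<Phi> t y \<in> C) \<and>
     (\<forall>t x y. 0 < t \<longrightarrow> x \<noteq> y \<longrightarrow> x - y \<in> C \<longrightarrow> \<Phi> t x - \<Phi> t y \<in> interior C)"

text \<open>Strongly focusing monotone; the condition inf_{v} inf_{u} ||v-u|| > kappa is unfolded
  literally (with the convention inf of the empty set = +infinity).\<close>
definition strongly_focusing_monotone ::
  "(real \<Rightarrow> 'a::real_normed_vector \<Rightarrow> 'a) \<Rightarrow> (real \<Rightarrow> 'a \<Rightarrow> 'a \<Rightarrow>\<^sub>L 'a) \<Rightarrow> 'a set \<Rightarrow> bool" where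
  "strongly_focusing_monotone \<Phi> D C \<longleftrightarrow>
     C1_semiflow \<Phi> D \<and> strongly_monotone \<Phi> C \<and>
     (\<forall>t x v. 0 < t \<longrightarrow> v \<in> C - {0} \<longrightarrow> blinfun_apply (D t x) v \<in> interior C) \<and>
     (\<forall>\<Sigma>. compact \<Sigma> \<and> invariant_set \<Phi> \<Sigma> \<longrightarrow>
        (\<exists>\<delta> T \<kappa>. 0 < \<delta> \<and> 0 < T \<and> 0 < \<kappa> \<and>
          (\<forall>z\<in>\<Sigma>. \<forall>x\<in>ball z \<delta>. \<forall>y\<in>ball z \<delta>.
             \<exists>L. linear L \<and> L (y - x) = \<Phi> T y - \<Phi> T x \<and>
               (\<exists>\<kappa>'>\<kappa>. \<forall>v\<in>L ` C. norm v = 1 \<longrightarrow> (\<forall>u. u \<notin> C \<longrightarrow> \<kappa>' \<le> norm (v - u))))))"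

definition compact_operator :: "('a::real_normed_vector \<Rightarrow>\<^sub>L 'b::real_normed_vector) \<Rightarrow> bool" where
  "compact_operator L \<longleftrightarrow> compact (closure (blinfun_apply L ` ball 0 1))"

definition omega_limit :: "(real \<Rightarrow> 'a::topological_space \<Rightarrow> 'a) \<Rightarrow> 'a \<Rightarrow> 'a set" where
  "omega_limit \<Phi> x = (\<Inter>s\<in>{0..}. closure (\<Union>t\<in>{s..}. {\<Phi> t x}))"

definition flow_extension :: "(real \<Rightarrow> 'a::topological_space \<Rightarrow> 'a) \<Rightarrow> 'a set \<Rightarrow> bool" where
  "flow_extension \<Phi> S \<longleftrightarrow> (\<exists>\<Psi>. continuous_on (UNIV \<times> S) (\<lambda>(t, z). \<Psi> t z) \<and>
     (\<forall>t. \<forall>z\<in>S. \<Psi> t z \<in> S) \<and> (\<forall>z\<in>S. \<Psi> 0 z = z) \<and>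
     (\<forall>t s. \<forall>z\<in>S. \<Psi> (t + s) z = \<Psi> t (\<Psi> s z)) \<and>
     (\<forall>t\<ge>0. \<forall>z\<in>S. \<Psi> t z = \<Phi> t z))"

definition continuous_bundle :: "'a::real_normed_vector set \<Rightarrow> ('a \<Rightarrow> 'a set) \<Rightarrow> bool" where
  "continuous_bundle \<Sigma> E \<longleftrightarrow> (\<forall>z\<in>\<Sigma>. \<forall>\<epsilon>>0. \<exists>\<delta>>0. \<forall>z'\<in>\<Sigma>. dist z' z < \<delta> \<longrightarrow>
      (\<forall>u\<in>E z'. norm u = 1 \<longrightarrow> infdist u (E z) < \<epsilon>) \<and>
      (\<forall>u\<in>E z. norm u = 1 \<longrightarrow> infdist u (E z') < \<epsilon>))"

definition k_exp_separation ::
  "(real \<Rightarrow> 'a::real_normed_vector \<Rightarrow> 'a) \<Rightarrow> (real \<Rightarrow> 'a \<Rightarrow> 'a \<Rightarrow>\<^sub>L 'a) \<Rightarrow> 'a set \<Rightarrow> nat \<Rightarrow>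
   'a set \<Rightarrow> ('a \<Rightarrow> 'a set) \<Rightarrow> ('a \<Rightarrow> 'a set) \<Rightarrow> bool" where
  "k_exp_separation \<Phi> D C k \<Sigma> E F \<longleftrightarrow>
     continuous_bundle \<Sigma> E \<and> continuous_bundle \<Sigma> F \<and>
     (\<forall>z\<in>\<Sigma>. kdim_subspace (E z) k \<and> kcodim_subspace (F z) k \<and> closed (F z) \<and>
        E z \<inter> F z = {0} \<and> (\<forall>x. \<exists>e\<in>E z. \<exists>f\<in>F z. x = e + f)) \<and>
     (\<forall>z\<in>\<Sigma>. \<forall>t>0. blinfun_apply (D t z) ` E z = E (\<Phi> t z) \<and>
        blinfun_apply (D t z) ` F z \<subseteq> F (\<Phi> t z)) \<and>
     (\<exists>M \<gamma>. 0 < M \<and> 0 < \<gamma> \<and> \<gamma> < 1 \<and>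
        (\<forall>z\<in>\<Sigma>. \<forall>t\<ge>0. \<forall>w\<in>F z. \<forall>v\<in>E z. norm w = 1 \<longrightarrow> norm v = 1 \<longrightarrow>
           norm (D t z w) \<le> M * \<gamma> powr t * norm (D t z v))) \<and>
     (\<forall>z\<in>\<Sigma>. E z \<subseteq> interior C \<union> {0} \<and> F z \<inter> C = {0})"

definition k_lyapunov :: "(real \<Rightarrow> 'a \<Rightarrow> 'a::real_normed_vector \<Rightarrow>\<^sub>L 'a) \<Rightarrow> ('a \<Rightarrow> 'a set) \<Rightarrow> 'a \<Rightarrow> ereal" where
  "k_lyapunov D E z = Limsup at_top
     (\<lambda>t::real. ereal ((1 / t) * ln (INF v\<in>{v\<in>E z. norm v = 1}. norm (D t z v))))"

end

theory Submission
  imports Defs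
begin

(* Near the omega-limit set, exponential separation together with positive Lyapunov exponents
   makes the semiflow double, after some time T >= 1, the distance of any two nearby points whose
   difference points deep into the cone C: the E-component of such a difference dominates its
   F-component, and E is expanded while F is comparatively contracted. Strong focusing turns the
   difference of the orbits of an ordered pair y, x into such a deep direction. Hence if the
   orbit of y stayed closer to that of x than the size of this neighbourhood, the repeated
   doubling would force the two orbits to merge, which strong monotonicity excludes. When C is
   the whole space, monotonicity says nothing; then the expansion makes x an equilibrium that no
   other orbit reaches in finite time. *)

section \<open>Semiflows and omega-limit sets\<close>

lemma semiflow_zero: "semiflow \<Phi> \<Longrightarrow> \<Phi> 0 x = x"
  by (simp add: semiflow_def)

lemma semiflow_add: "semiflow \<Phi> \<Longrightarrow> 0 \<le> t \<Longrightarrow> 0 \<le> s \<Longrightarrow> \<Phi> (t + s) x = \<Phi> t (\<Phi> s x)"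
  by (simp add: semiflow_def)

lemma semiflow_continuous_orbit:
  assumes "semiflow \<Phi>"
  shows "continuous_on {0..} (\<lambda>t. \<Phi> t a)"
proof -
  have "continuous_on ({0..} \<times> UNIV) (\<lambda>(t, x). \<Phi> t x)"
    using assms by (simp add: semiflow_def)
  then have "continuous_on {0..} ((\<lambda>(t, x). \<Phi> t x) \<circ> (\<lambda>t. (t, a)))"
    by (intro continuous_on_compose continuous_intros) (auto elim: continuous_on_subset)
  then show ?thesis
    by (simp add: o_def)
qed

lemma semiflow_uniformly_small_time:
  assumes "semiflow \<Phi>" and "compact K" and "0 < r"
  shows "\<exists>h0>0. \<forall>h\<in>{0..h0}. \<forall>p\<in>K. dist (\<Phi> h p) p < r"
proof -
  have "uniformly_continuous_on ({0..1} \<times> K) (\<lambda>(t, x). \<Phi> t x)"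
    using assms(1,2) unfolding semiflow_def
    by (intro compact_uniformly_continuous compact_Times) (auto elim: continuous_on_subset)
  then obtain d where d: "0 < d" "\<And>a b. a \<in> {0..1} \<times> K \<Longrightarrow> b \<in> {0..1} \<times> K \<Longrightarrow> dist b a < d \<Longrightarrow>
      dist ((\<lambda>(t, x). \<Phi> t x) b) ((\<lambda>(t, x). \<Phi> t x) a) < r"
    using \<open>0 < r\<close> unfolding uniformly_continuous_on_def by metis
  have "dist (\<Phi> h p) p < r" if "h \<in> {0..min (d / 2) 1}" "p \<in> K" for h p
    using d(2)[of "(0, p)" "(h, p)"] d(1) that semiflow_zero[OF assms(1)]
    by (auto simp: dist_Pair_Pair)
  then show ?thesis
    using d(1) by (intro exI[of _ "min (d / 2) 1"]) auto
qed

lemma omega_limit_subset_orbit_closure: "omega_limit \<Phi> x \<subseteq> closure ((\<lambda>t. \<Phi> t x) ` {0..})"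
proof -
  have "omega_limit \<Phi> x \<subseteq> closure (\<Union>t\<in>{0..}. {\<Phi> t x})"
    unfolding omega_limit_def by (rule INF_lower) simp
  also have "(\<Union>t\<in>{0..}. {\<Phi> t x}) = (\<lambda>t. \<Phi> t x) ` {0..}"
    by auto
  finally show ?thesis .
qed

lemma compact_omega_limit:
  assumes "compact (closure ((\<lambda>t. \<Phi> t x) ` {0..}))"
  shows "compact (omega_limit \<Phi> x)"
proof -
  have "closed (omega_limit \<Phi> x)"
    unfolding omega_limit_def by (intro closed_Inter) auto
  then show ?thesis
    using compact_Int_closed[OF assms] omega_limit_subset_orbit_closure[of \<Phi> x]
    by (metis Int_absorb1)
qed

lemma omega_limitI:
  assumes "filterlim \<tau> at_top sequentially" and "(\<lambda>n. \<Phi> (\<tau> n) x) \<longlonglongrightarrow> l"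
  shows "l \<in> omega_limit \<Phi> x"
  unfolding omega_limit_def
proof (intro InterI, clarify)
  fix s :: real
  have "\<forall>\<^sub>F n in sequentially. s \<le> \<tau> n"
    using assms(1) by (simp add: filterlim_at_top)
  then have "\<forall>\<^sub>F n in sequentially. \<Phi> (\<tau> n) x \<in> closure (\<Union>t\<in>{s..}. {\<Phi> t x})"
    by eventually_elim (rule closure_subset[THEN subsetD], auto)
  then show "l \<in> closure (\<Union>t\<in>{s..}. {\<Phi> t x})"
    by (rule Lim_in_closed_set[OF closed_closure _ sequentially_bot assms(2)])
qed

lemma eventually_near_omega_limit:
  fixes \<Phi> :: "real \<Rightarrow> 'a::metric_space \<Rightarrow> 'a"
  assumes "compact (closure ((\<lambda>t. \<Phi> t x) ` {0..}))" and "0 < e"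
  shows "\<forall>\<^sub>F t in at_top. \<exists>z\<in>omega_limit \<Phi> x. dist (\<Phi> t x) z < e"
proof (rule ccontr)
  assume "\<not> ?thesis"
  then have "\<forall>n::nat. \<exists>t\<ge>real n. \<forall>z\<in>omega_limit \<Phi> x. e \<le> dist (\<Phi> t x) z"
    unfolding eventually_at_top_linorder by (meson not_less)
  then obtain \<tau> where \<tau>: "\<And>n. real n \<le> \<tau> n" "\<And>n z. z \<in> omega_limit \<Phi> x \<Longrightarrow> e \<le> dist (\<Phi> (\<tau> n) x) z"
    by metis
  have "\<Phi> (\<tau> n) x \<in> closure ((\<lambda>t. \<Phi> t x) ` {0..})" for n
    using \<tau>(1)[of n] by (intro closure_subset[THEN subsetD]) auto
  then obtain l \<sigma> where "strict_mono \<sigma>" and "((\<lambda>n. \<Phi> (\<tau> n) x) \<circ> \<sigma>) \<longlonglongrightarrow> l"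
    using seq_compactE[OF compact_imp_seq_compact[OF assms(1)], of "\<lambda>n. \<Phi> (\<tau> n) x"] by blast
  then have lim: "(\<lambda>n. \<Phi> (\<tau> (\<sigma> n)) x) \<longlonglongrightarrow> l"
    by (simp add: o_def)
  have "real n \<le> \<tau> (\<sigma> n)" for n
    using order_trans[OF of_nat_mono[OF seq_suble[OF \<open>strict_mono \<sigma>\<close>]] \<tau>(1)] .
  then have "filterlim (\<lambda>n. \<tau> (\<sigma> n)) at_top sequentially"
    by (intro filterlim_at_top_mono[OF filterlim_real_sequentially] always_eventually) simp
  then have "l \<in> omega_limit \<Phi> x"
    using lim by (rule omega_limitI)
  moreover obtain n where "dist (\<Phi> (\<tau> (\<sigma> n)) x) l < e"
    using eventually_happens'[OF sequentially_bot tendsto_iff[THEN iffD1, OF lim, rule_format, OF \<open>0 < e\<close>]]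
    by blast
  ultimately show False
    using \<tau>(2)[of l "\<sigma> n"] by simp
qed

lemma flow_extension_imp_invariant_set:
  assumes "flow_extension \<Phi> S"
  shows "invariant_set \<Phi> S"
  unfolding invariant_set_def
proof (intro allI impI equalityI subsetI)
  obtain \<Psi> where \<Psi>: "\<forall>t. \<forall>z\<in>S. \<Psi> t z \<in> S" "\<forall>z\<in>S. \<Psi> 0 z = z"
      "\<forall>t s. \<forall>z\<in>S. \<Psi> (t + s) z = \<Psi> t (\<Psi> s z)" "\<forall>t\<ge>0. \<forall>z\<in>S. \<Psi> t z = \<Phi> t z"
    using assms unfolding flow_extension_def by blast
  fix t :: real and w
  assume "0 \<le> t"
  show "w \<in> S" if "w \<in> \<Phi> t ` S"
    using that \<Psi>(1) \<Psi>(4)[rule_format, OF \<open>0 \<le> t\<close>, symmetric] by auto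
  show "w \<in> \<Phi> t ` S" if "w \<in> S"
  proof
    show "w = \<Phi> t (\<Psi> (-t) w)"
      using \<Psi> \<open>w \<in> S\<close> \<open>0 \<le> t\<close> by (metis add.right_inverse)
  qed (use \<Psi>(1) \<open>w \<in> S\<close> in blast)
qed

section \<open>Directions deep inside the cone\<close>

definition deep_in :: "'a::real_normed_vector set \<Rightarrow> real \<Rightarrow> 'a \<Rightarrow> bool" where
  "deep_in C \<kappa> v \<longleftrightarrow> v \<noteq> 0 \<and> ball (sgn v) \<kappa> \<subseteq> C"

lemma deep_in_UNIV [simp]: "deep_in UNIV \<kappa> v \<longleftrightarrow> v \<noteq> 0"
  by (simp add: deep_in_def)

lemma deep_unit_vector_split:
  fixes u e f :: "'a::real_normed_vector"
  assumes "norm u = 1" and "ball u \<kappa> \<subseteq> C" and "u = e + f"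
    and "f \<in> F" and "F \<inter> C = {0}" and "0 < \<kappa>" and "\<kappa> \<le> 1"
  shows "\<kappa> \<le> norm e" and "norm f \<le> 2 / \<kappa> * norm e"
proof -
  show ke: "\<kappa> \<le> norm e"
  proof (rule ccontr)
    assume "\<not> \<kappa> \<le> norm e"
    then have "f \<in> C"
      using assms(2,3) by (auto simp: dist_norm)
    then have "f = 0"
      using assms(4,5) by blast
    then show False
      using \<open>\<not> \<kappa> \<le> norm e\<close> assms(1,3,7) by simp
  qed
  have "norm f \<le> norm u + norm e"
    using assms(3) norm_triangle_ineq4[of u e] by simp
  also have "\<dots> \<le> norm e / \<kappa> + norm e / \<kappa>"
  proof -
    have "1 \<le> norm e / \<kappa>" and "norm e \<le> norm e / \<kappa>"
      using ke assms(6,7) mult_left_le_one_le[of "norm e" \<kappa>] by (simp_all add: le_divide_eq mult.commute)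
    then show ?thesis
      using assms(1) by linarith
  qed
  also have "\<dots> = 2 / \<kappa> * norm e"
    by simp
  finally show "norm f \<le> 2 / \<kappa> * norm e" .
qed

lemma linear_expands_deep_directions:
  fixes A :: "'a::real_normed_vector \<Rightarrow> 'b::real_normed_vector"
  assumes "linear A" and "subspace E" and "subspace F"
    and split: "\<forall>w. \<exists>e\<in>E. \<exists>f\<in>F. w = e + f" and "F \<inter> C = {0}"
    and lower: "\<forall>v\<in>E. norm v = 1 \<longrightarrow> \<mu> \<le> norm (A v)"
    and dominated: "\<forall>f\<in>F. \<forall>v\<in>E. norm f = 1 \<longrightarrow> norm v = 1 \<longrightarrow> norm (A f) \<le> c * norm (A v)"
    and "0 \<le> \<mu>" and "0 < \<kappa>" and "\<kappa> \<le> 1" and "4 * c \<le> \<kappa>"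
    and "deep_in C \<kappa> w"
  shows "\<mu> * \<kappa> / 2 * norm w \<le> norm (A w)"
proof -
  have "w \<noteq> 0" and deep: "ball (sgn w) \<kappa> \<subseteq> C"
    using \<open>deep_in C \<kappa> w\<close> by (auto simp: deep_in_def)
  obtain e f where "e \<in> E" "f \<in> F" and sgn_split: "sgn w = e + f"
    using split by blast
  have "norm (sgn w) = 1"
    using \<open>w \<noteq> 0\<close> by (simp add: norm_sgn)
  note bounds = deep_unit_vector_split[OF this deep sgn_split \<open>f \<in> F\<close> \<open>F \<inter> C = {0}\<close> \<open>0 < \<kappa>\<close> \<open>\<kappa> \<le> 1\<close>]
  then have "e \<noteq> 0"
    using \<open>0 < \<kappa>\<close> by auto
  have scale: "A v = norm v *\<^sub>R A (sgn v)" for v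
    using linear_cmul[OF \<open>linear A\<close>, of "norm v" "sgn v"] by (cases "v = 0") (simp_all add: linear_0[OF \<open>linear A\<close>] sgn_div_norm)
  have unit_e: "sgn e \<in> E" "norm (sgn e) = 1"
    using \<open>e \<noteq> 0\<close> \<open>e \<in> E\<close> \<open>subspace E\<close> by (auto simp: sgn_div_norm subspace_scale norm_sgn)
  have "\<mu> \<le> norm (A (sgn e))"
    using lower unit_e by blast
  then have "\<mu> * norm e \<le> norm (A (sgn e)) * norm e"
    by (rule mult_right_mono) simp
  then have Ae: "\<mu> * norm e \<le> norm (A e)"
    using scale[of e] by (simp add: mult.commute)
  have Af: "norm (A f) \<le> norm (A e) / 2"
  proof (cases "f = 0")
    case False
    have "sgn f \<in> F" "norm (sgn f) = 1"
      using False \<open>f \<in> F\<close> \<open>subspace F\<close> by (auto simp: sgn_div_norm subspace_scale norm_sgn)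
    then have "norm (A f) \<le> norm f * (c * norm (A (sgn e)))"
      using dominated unit_e scale[of f] by (simp add: mult_left_mono)
    also have "\<dots> = c * (norm f / norm e) * norm (A e)"
      using scale[of e] \<open>e \<noteq> 0\<close> by simp
    also have "\<dots> \<le> \<kappa> / 4 * (2 / \<kappa>) * norm (A e)"
      using bounds \<open>e \<noteq> 0\<close> \<open>4 * c \<le> \<kappa>\<close> \<open>0 < \<kappa>\<close>
      by (intro mult_right_mono mult_mono) (auto simp: divide_le_eq mult.commute)
    finally show ?thesis
      using \<open>0 < \<kappa>\<close> by simp
  qed (simp add: linear_0[OF \<open>linear A\<close>])
  have "norm (A e) - norm (A f) \<le> norm (A (sgn w))"
    using norm_triangle_ineq2[of "A e" "- A f"] sgn_split linear_add[OF \<open>linear A\<close>] by simp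
  then have "\<mu> * \<kappa> / 2 \<le> norm (A (sgn w))"
    using Ae Af bounds(1) \<open>0 \<le> \<mu>\<close> mult_left_mono[OF bounds(1) \<open>0 \<le> \<mu>\<close>] by linarith
  then have "norm w * (\<mu> * \<kappa> / 2) \<le> norm w * norm (A (sgn w))"
    by (rule mult_left_mono) simp
  then show ?thesis
    using scale[of w] by (simp add: ac_simps)
qed

section \<open>Expansion near the omega-limit set\<close>

lemma frequently_gt_if_growth_rate_pos:
  fixes m :: "real \<Rightarrow> real"
  assumes "0 < Limsup at_top (\<lambda>t. ereal (1 / t * ln (m t)))" and "\<And>t. 0 \<le> m t"
  shows "\<exists>\<^sub>F t in at_top. B < m t"
proof -
  obtain a where "0 < ereal a" and a: "ereal a < Limsup at_top (\<lambda>t. ereal (1 / t * ln (m t)))"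
    using ereal_dense2[OF assms(1)] by blast
  then have "0 < a"
    by simp
  have "\<exists>\<^sub>F t in at_top. a < 1 / t * ln (m t)"
    using a Limsup_bounded[of "\<lambda>t. ereal (1 / t * ln (m t))" "ereal a" at_top]
    by (auto simp: frequently_def not_less elim: eventually_mono)
  moreover have "\<forall>\<^sub>F t in at_top. 0 < t \<and> ln (max B 1) \<le> a * t"
    using \<open>0 < a\<close> by (intro eventually_conj eventually_gt_at_top eventually_ge_at_top[of "ln (max B 1) / a", THEN eventually_mono])
      (simp add: divide_le_eq mult.commute)
  ultimately show ?thesis
  proof (rule frequently_eventually_frequently[THEN frequently_elim1], clarify)
    fix t
    assume "a < 1 / t * ln (m t)" "0 < t" "ln (max B 1) \<le> a * t"
    then have "ln (max B 1) < ln (m t)"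
      by (simp add: field_simps)
    moreover have "0 \<le> ln (max B 1)"
      by simp
    ultimately have "0 < m t"
      using assms(2)[of t] by (cases "m t = 0") auto
    with \<open>ln (max B 1) < ln (m t)\<close> have "max B 1 < m t"
      by simp
    then show "B < m t"
      by simp
  qed
qed

lemma k_lyapunov_pos_imp_frequently_expanding:
  assumes "0 < k_lyapunov D E z"
  shows "\<exists>\<^sub>F t in at_top. \<forall>v\<in>E z. norm v = 1 \<longrightarrow> B < norm (D t z v)"
proof (cases "{v\<in>E z. norm v = 1} = {}")
  case True
  then show ?thesis
    by (auto simp: frequently_def)
next
  case False
  define m where "m t = (INF v\<in>{v\<in>E z. norm v = 1}. norm (D t z v))" for t
  have "0 \<le> m t" for t
    unfolding m_def using False by (intro cINF_greatest) auto
  then have "\<exists>\<^sub>F t in at_top. B < m t"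
    using assms unfolding k_lyapunov_def m_def[symmetric]
    by (intro frequently_gt_if_growth_rate_pos) auto
  moreover have "m t \<le> norm (D t z v)" if "v \<in> E z" "norm v = 1" for t v
    unfolding m_def using that by (intro cINF_lower bdd_belowI[of _ 0]) auto
  ultimately show ?thesis
    by (elim frequently_elim1) (auto intro: less_le_trans)
qed

lemma eventually_powr_le_at_top:
  fixes \<gamma> :: real
  assumes "0 < \<gamma>" and "\<gamma> < 1" and "0 < \<epsilon>"
  shows "\<forall>\<^sub>F t in at_top. \<gamma> powr t \<le> \<epsilon>"
  using eventually_ge_at_top[of "ln \<epsilon> / ln \<gamma>"]
proof eventually_elim
  fix t
  assume "ln \<epsilon> / ln \<gamma> \<le> t"
  then have "t * ln \<gamma> \<le> ln \<epsilon>"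
    using assms(1,2) by (simp add: neg_divide_le_eq ln_less_zero)
  then show "\<gamma> powr t \<le> \<epsilon>"
    using assms by (simp add: powr_def ln_le_cancel_iff[symmetric])
qed

lemma isCont_derivative_imp_linearization:
  fixes f :: "'a::real_normed_vector \<Rightarrow> 'b::real_normed_vector"
  assumes "\<And>s. (f has_derivative blinfun_apply (f' s)) (at s)" and "isCont f' z" and "0 < \<epsilon>"
  shows "\<exists>\<rho>>0. \<forall>p\<in>ball z \<rho>. \<forall>q\<in>ball z \<rho>. norm (f q - f p - f' z (q - p)) \<le> \<epsilon> * norm (q - p)"
proof -
  obtain \<rho> where "0 < \<rho>" and \<rho>: "\<And>s. dist s z < \<rho> \<Longrightarrow> dist (f' s) (f' z) < \<epsilon>"
    using assms(2,3) unfolding continuous_at_eps_delta by blast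
  have "norm (f q - f p - f' z (q - p)) \<le> norm (q - p) * \<epsilon>"
    if "p \<in> ball z \<rho>" "q \<in> ball z \<rho>" for p q
  proof (rule differentiable_bound_linearization[where S = "ball z \<rho>"])
    show "p + t *\<^sub>R (q - p) \<in> ball z \<rho>" if "t \<in> {0..1}" for t
      using convex_ball[of z \<rho>] \<open>p \<in> ball z \<rho>\<close> \<open>q \<in> ball z \<rho>\<close> that
      by (auto simp: convex_alt algebra_simps)
    show "(f has_derivative blinfun_apply (f' s)) (at s within ball z \<rho>)" for s
      using assms(1) by (rule has_derivative_at_withinI)
    show "onorm (blinfun_apply (f' s) - blinfun_apply (f' z)) \<le> \<epsilon>" if "s \<in> ball z \<rho>" for s
    proof -
      have "blinfun_apply (f' s) - blinfun_apply (f' z) = blinfun_apply (f' s - f' z)"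
        by (simp add: minus_blinfun.rep_eq fun_diff_def)
      then show ?thesis
        using \<rho>[of s] that by (simp add: dist_norm norm_blinfun.rep_eq norm_minus_commute)
    qed
  qed (use \<open>0 < \<rho>\<close> in simp)
  then show ?thesis
    using \<open>0 < \<rho>\<close> by (auto simp: mult.commute)
qed

lemma k_exp_separation_splitting:
  assumes "k_exp_separation \<Phi> D C k \<Sigma> E F" and "z \<in> \<Sigma>"
  shows "subspace (E z)" and "subspace (F z)" and "\<forall>w. \<exists>e\<in>E z. \<exists>f\<in>F z. w = e + f"
    and "F z \<inter> C = {0}"
  using assms unfolding k_exp_separation_def kdim_subspace_def kcodim_subspace_def
  by auto

lemma k_exp_separation_domination:
  assumes "k_exp_separation \<Phi> D C k \<Sigma> E F"
  shows "\<exists>M \<gamma>. 0 < M \<and> 0 < \<gamma> \<and> \<gamma> < 1 \<and>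
    (\<forall>z\<in>\<Sigma>. \<forall>t\<ge>0. \<forall>w\<in>F z. \<forall>v\<in>E z. norm w = 1 \<longrightarrow> norm v = 1 \<longrightarrow>
       norm (D t z w) \<le> M * \<gamma> powr t * norm (D t z v))"
  using assms unfolding k_exp_separation_def by (elim conjE) assumption

lemma exp_separation_expands_near_point:
  fixes \<Phi> :: "real \<Rightarrow> 'a::real_normed_vector \<Rightarrow> 'a"
  assumes "C1_semiflow \<Phi> D" and sep: "k_exp_separation \<Phi> D C k \<Sigma> E F" and "z \<in> \<Sigma>"
    and "0 < k_lyapunov D E z" and "0 < \<kappa>" and "\<kappa> \<le> 1"
  shows "\<exists>T\<ge>1. \<exists>\<rho>>0. \<forall>p\<in>ball z \<rho>. \<forall>q\<in>ball z \<rho>.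
           deep_in C \<kappa> (q - p) \<longrightarrow> 2 * norm (q - p) \<le> norm (\<Phi> T q - \<Phi> T p)"
proof -
  obtain M \<gamma> where "0 < M" "0 < \<gamma>" "\<gamma> < 1" and dominated_on:
    "\<forall>z\<in>\<Sigma>. \<forall>t\<ge>0. \<forall>f\<in>F z. \<forall>v\<in>E z. norm f = 1 \<longrightarrow> norm v = 1 \<longrightarrow>
       norm (D t z f) \<le> M * \<gamma> powr t * norm (D t z v)"
    using k_exp_separation_domination[OF sep] by blast
  note dominated = dominated_on[rule_format, OF \<open>z \<in> \<Sigma>\<close>]
  note splitting = k_exp_separation_splitting[OF sep \<open>z \<in> \<Sigma>\<close>]
  have "0 < \<kappa> / (4 * M)"
    using \<open>0 < \<kappa>\<close> \<open>0 < M\<close> by simp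
  \<comment> \<open>With these constants D T z stretches deep directions by 3; the linearization error costs 1.\<close>
  have "\<forall>\<^sub>F t in at_top. 1 \<le> t \<and> M * \<gamma> powr t \<le> \<kappa> / 4"
    using eventually_ge_at_top[of 1] eventually_powr_le_at_top[OF \<open>0 < \<gamma>\<close> \<open>\<gamma> < 1\<close> \<open>0 < \<kappa> / (4 * M)\<close>]
  proof eventually_elim
    case (elim t)
    then show ?case
      using \<open>0 < M\<close> by (simp add: field_simps)
  qed
  then have "\<exists>\<^sub>F t in at_top. (1 \<le> t \<and> M * \<gamma> powr t \<le> \<kappa> / 4) \<and> (\<forall>v\<in>E z. norm v = 1 \<longrightarrow> 6 / \<kappa> < norm (D t z v))"
    by (rule frequently_eventually_conj[OF k_lyapunov_pos_imp_frequently_expanding[OF \<open>0 < k_lyapunov D E z\<close>]])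
  then obtain T where "1 \<le> T" "M * \<gamma> powr T \<le> \<kappa> / 4"
    and expanding: "\<forall>v\<in>E z. norm v = 1 \<longrightarrow> 6 / \<kappa> < norm (D T z v)"
    using frequently_ex by blast
  have derivative_expands: "3 * norm w \<le> norm (D T z w)" if "deep_in C \<kappa> w" for w
  proof -
    have "6 / \<kappa> * \<kappa> / 2 * norm w \<le> norm (D T z w)"
      using splitting expanding dominated \<open>1 \<le> T\<close> \<open>M * \<gamma> powr T \<le> \<kappa> / 4\<close> \<open>0 < \<kappa>\<close> \<open>\<kappa> \<le> 1\<close> that
      by (intro linear_expands_deep_directions[where c = "M * \<gamma> powr T"])
        (auto simp: bounded_linear.linear[OF blinfun.bounded_linear_right] less_imp_le)
    then show ?thesis
      using \<open>0 < \<kappa>\<close> by simp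
  qed
  have "isCont (D T) z" and "\<And>s. (\<Phi> T has_derivative blinfun_apply (D T s)) (at s)"
    using \<open>C1_semiflow \<Phi> D\<close> \<open>1 \<le> T\<close> unfolding C1_semiflow_def
    by (auto simp: continuous_on_eq_continuous_at)
  then obtain \<rho> where "0 < \<rho>" and linearization:
    "\<forall>p\<in>ball z \<rho>. \<forall>q\<in>ball z \<rho>. norm (\<Phi> T q - \<Phi> T p - D T z (q - p)) \<le> 1 * norm (q - p)"
    using isCont_derivative_imp_linearization[of "\<Phi> T" "D T" z 1] by auto
  have "2 * norm (q - p) \<le> norm (\<Phi> T q - \<Phi> T p)"
    if "p \<in> ball z \<rho>" "q \<in> ball z \<rho>" "deep_in C \<kappa> (q - p)" for p q
  proof -
    have "norm (\<Phi> T q - \<Phi> T p - D T z (q - p)) \<le> norm (q - p)"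
      using linearization that by simp
    moreover have "3 * norm (q - p) \<le> norm (D T z (q - p))"
      using derivative_expands that(3) .
    ultimately show ?thesis
      using norm_triangle_ineq2[of "D T z (q - p)" "\<Phi> T q - \<Phi> T p"]
        norm_minus_commute[of "D T z (q - p)" "\<Phi> T q - \<Phi> T p"] by linarith
  qed
  then show ?thesis
    using \<open>1 \<le> T\<close> \<open>0 < \<rho>\<close> by blast
qed

text \<open>The bound T \<ge> 1 lets the case C = UNIV step back by a time h < 1 from the first time an
  orbit hits an equilibrium.\<close>

definition expands_near :: "(real \<Rightarrow> 'a::real_normed_vector \<Rightarrow> 'a) \<Rightarrow> 'a set \<Rightarrow> real \<Rightarrow> 'a set \<Rightarrow> real \<Rightarrow> bool" where
  "expands_near \<Phi> C \<kappa> \<Sigma> r \<longleftrightarrow>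
     (\<forall>p q. (\<exists>z\<in>\<Sigma>. dist p z < r) \<longrightarrow> norm (q - p) < r \<longrightarrow> deep_in C \<kappa> (q - p) \<longrightarrow>
        (\<exists>T\<ge>1. 2 * norm (q - p) \<le> norm (\<Phi> T q - \<Phi> T p)))"

lemma compact_expands_near:
  assumes "compact \<Sigma>"
    and "\<forall>z\<in>\<Sigma>. \<exists>T\<ge>1. \<exists>\<rho>>0. \<forall>p\<in>ball z \<rho>. \<forall>q\<in>ball z \<rho>.
           deep_in C \<kappa> (q - p) \<longrightarrow> 2 * norm (q - p) \<le> norm (\<Phi> T q - \<Phi> T p)"
  shows "\<exists>r>0. expands_near \<Phi> C \<kappa> \<Sigma> r"
proof -
  obtain T \<rho> where T\<rho>: "\<And>z. z \<in> \<Sigma> \<Longrightarrow> 1 \<le> T z \<and> 0 < \<rho> z \<and> (\<forall>p\<in>ball z (\<rho> z). \<forall>q\<in>ball z (\<rho> z).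
           deep_in C \<kappa> (q - p) \<longrightarrow> 2 * norm (q - p) \<le> norm (\<Phi> (T z) q - \<Phi> (T z) p))"
    using assms(2) by metis
  have "\<Sigma> \<subseteq> \<Union> ((\<lambda>z. ball z (\<rho> z)) ` \<Sigma>)"
    using T\<rho> by force
  then obtain \<epsilon> where "0 < \<epsilon>" and lebesgue: "\<And>x. x \<in> \<Sigma> \<Longrightarrow> \<exists>z\<in>\<Sigma>. ball x \<epsilon> \<subseteq> ball z (\<rho> z)"
    using Heine_Borel_lemma[OF assms(1)] by (metis (no_types, lifting) imageE open_ball)
  have "expands_near \<Phi> C \<kappa> \<Sigma> (\<epsilon> / 2)"
    unfolding expands_near_def
  proof (intro allI impI)
    fix p q
    assume "\<exists>x\<in>\<Sigma>. dist p x < \<epsilon> / 2" "norm (q - p) < \<epsilon> / 2" "deep_in C \<kappa> (q - p)"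
    then obtain x z where "z \<in> \<Sigma>" "dist p x < \<epsilon> / 2" and cover: "ball x \<epsilon> \<subseteq> ball z (\<rho> z)"
      using lebesgue by blast
    moreover have "dist q x < \<epsilon>"
      using \<open>dist p x < \<epsilon> / 2\<close> \<open>norm (q - p) < \<epsilon> / 2\<close> dist_triangle[of q x p]
      by (simp add: dist_norm)
    ultimately have "p \<in> ball x \<epsilon>" "q \<in> ball x \<epsilon>"
      using \<open>0 < \<epsilon>\<close> by (simp_all add: dist_commute)
    then have "p \<in> ball z (\<rho> z)" "q \<in> ball z (\<rho> z)"
      using cover by blast+
    then show "\<exists>T\<ge>1. 2 * norm (q - p) \<le> norm (\<Phi> T q - \<Phi> T p)"
      using T\<rho>[OF \<open>z \<in> \<Sigma>\<close>] \<open>deep_in C \<kappa> (q - p)\<close> by blast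
  qed
  then show ?thesis
    using \<open>0 < \<epsilon>\<close> by (intro exI[of _ "\<epsilon> / 2"]) simp
qed

lemma expands_near_close_orbits_coincide:
  assumes "semiflow \<Phi>" and "expands_near \<Phi> C \<kappa> \<Sigma> r" and "0 \<le> t\<^sub>0"
    and close: "\<forall>t\<ge>t\<^sub>0. (\<exists>z\<in>\<Sigma>. dist (\<Phi> t a) z < r) \<and> norm (\<Phi> t b - \<Phi> t a) < r \<and>
                  (\<Phi> t b \<noteq> \<Phi> t a \<longrightarrow> deep_in C \<kappa> (\<Phi> t b - \<Phi> t a))"
    and "t\<^sub>0 \<le> t"
  shows "\<Phi> t b = \<Phi> t a"
proof (rule ccontr)
  assume "\<Phi> t b \<noteq> \<Phi> t a"
  define c where "c = norm (\<Phi> t b - \<Phi> t a)"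
  have "0 < c"
    using \<open>\<Phi> t b \<noteq> \<Phi> t a\<close> by (simp add: c_def)
  have doubling: "\<exists>s\<ge>t\<^sub>0. 2 ^ n * c \<le> norm (\<Phi> s b - \<Phi> s a)" for n
  proof (induction n)
    case 0
    then show ?case
      using \<open>t\<^sub>0 \<le> t\<close> by (auto simp: c_def)
  next
    case (Suc n)
    then obtain s where "t\<^sub>0 \<le> s" and s: "2 ^ n * c \<le> norm (\<Phi> s b - \<Phi> s a)"
      by blast
    moreover have "0 < 2 ^ n * c"
      using \<open>0 < c\<close> by simp
    ultimately have "\<Phi> s b \<noteq> \<Phi> s a"
      by auto
    then obtain T where "1 \<le> T" and T: "2 * norm (\<Phi> s b - \<Phi> s a) \<le> norm (\<Phi> T (\<Phi> s b) - \<Phi> T (\<Phi> s a))"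
      using assms(2) close \<open>t\<^sub>0 \<le> s\<close> unfolding expands_near_def by blast
    have "\<Phi> T (\<Phi> s y) = \<Phi> (T + s) y" for y
      using semiflow_add[OF assms(1), of T s y] \<open>1 \<le> T\<close> \<open>0 \<le> t\<^sub>0\<close> \<open>t\<^sub>0 \<le> s\<close> by simp
    then have "2 ^ Suc n * c \<le> norm (\<Phi> (T + s) b - \<Phi> (T + s) a)"
      using s T by simp
    moreover have "t\<^sub>0 \<le> T + s"
      using \<open>1 \<le> T\<close> \<open>t\<^sub>0 \<le> s\<close> by simp
    ultimately show ?case
      by blast
  qed
  obtain n where "r / c < 2 ^ n"
    using real_arch_pow[of 2 "r / c"] by auto
  then have "r < 2 ^ n * c"
    using \<open>0 < c\<close> by (simp add: divide_less_eq)
  moreover obtain s where "t\<^sub>0 \<le> s" "2 ^ n * c \<le> norm (\<Phi> s b - \<Phi> s a)"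
    using doubling by blast
  ultimately show False
    using close by fastforce
qed

section \<open>Orbits of ordered pairs never merge\<close>

lemma expands_near_UNIV_equilibrium_unreachable:
  assumes "semiflow \<Phi>" and expands: "expands_near \<Phi> UNIV \<kappa> \<Sigma> r" and "0 < r"
    and "e \<in> \<Sigma>" and equilibrium: "\<forall>t\<ge>0. \<Phi> t e = e" and "0 \<le> \<tau>" and "\<Phi> \<tau> a = e"
  shows "a = e"
proof (rule ccontr)
  assume "a \<noteq> e"
  define S where "S = {0..} \<inter> (\<lambda>t. \<Phi> t a) -` {e}"
  have "closed S"
    unfolding S_def by (rule continuous_closed_preimage[OF semiflow_continuous_orbit[OF assms(1)]]) auto
  moreover have "\<tau> \<in> S" and "bdd_below S"
    using \<open>0 \<le> \<tau>\<close> \<open>\<Phi> \<tau> a = e\<close> by (auto simp: S_def bdd_below_def)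
  ultimately have "Inf S \<in> S"
    using closed_contains_Inf by blast
  define s where "s = Inf S"
  have "0 \<le> s" "\<Phi> s a = e"
    using \<open>Inf S \<in> S\<close> by (auto simp: S_def s_def)
  then have "0 < s"
    using \<open>a \<noteq> e\<close> semiflow_zero[OF assms(1)] by (cases "s = 0") auto
  obtain \<eta> where "0 < \<eta>" and \<eta>: "\<And>t. 0 \<le> t \<Longrightarrow> dist t s < \<eta> \<Longrightarrow> dist (\<Phi> t a) e < r"
    using semiflow_continuous_orbit[OF assms(1), of a] \<open>0 \<le> s\<close> \<open>0 < r\<close> \<open>\<Phi> s a = e\<close>
    unfolding continuous_on_iff by (metis atLeast_iff)
  \<comment> \<open>Just before the first hitting time s, q is close to e but merges with it after time T.\<close>
  define h where "h = min (min (\<eta> / 2) s) (1 / 2)"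
  have "0 < h" "h \<le> s" "h < \<eta>" "h < 1"
    using \<open>0 < \<eta>\<close> \<open>0 < s\<close> by (auto simp: h_def)
  define q where "q = \<Phi> (s - h) a"
  have "q \<noteq> e"
  proof
    assume "q = e"
    then have "s - h \<in> S"
      using \<open>h \<le> s\<close> by (simp add: S_def q_def)
    then show False
      using cInf_lower[OF _ \<open>bdd_below S\<close>] \<open>0 < h\<close> by (fastforce simp: s_def)
  qed
  moreover have "norm (q - e) < r"
    using \<eta>[of "s - h"] \<open>h \<le> s\<close> \<open>h < \<eta>\<close> \<open>0 < h\<close> by (simp add: q_def dist_norm)
  moreover have "\<exists>z\<in>\<Sigma>. dist e z < r"
    using \<open>e \<in> \<Sigma>\<close> \<open>0 < r\<close> by force
  ultimately obtain T where "1 \<le> T" and T: "2 * norm (q - e) \<le> norm (\<Phi> T q - \<Phi> T e)"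
    using expands unfolding expands_near_def by auto
  have "\<Phi> T q = \<Phi> (T + (s - h)) a"
    using \<open>1 \<le> T\<close> \<open>h \<le> s\<close> by (simp add: q_def semiflow_add[OF assms(1)])
  also have "\<dots> = \<Phi> (T - h) (\<Phi> s a)"
    using \<open>1 \<le> T\<close> \<open>h < 1\<close> \<open>0 \<le> s\<close> semiflow_add[OF assms(1), of "T - h" s a]
    by (simp add: algebra_simps)
  also have "\<dots> = e"
    using equilibrium \<open>\<Phi> s a = e\<close> \<open>1 \<le> T\<close> \<open>h < 1\<close> by simp
  finally have "norm (q - e) \<le> 0"
    using T equilibrium \<open>1 \<le> T\<close> by simp
  then show False
    using \<open>q \<noteq> e\<close> by simp
qed

lemma expands_near_UNIV_orbit_eventually_constant:
  assumes "semiflow \<Phi>" and "compact (closure ((\<lambda>t. \<Phi> t x) ` {0..}))"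
    and expands: "expands_near \<Phi> UNIV \<kappa> \<Sigma> r" and "0 < r"
    and near: "\<forall>\<^sub>F t in at_top. \<exists>z\<in>\<Sigma>. dist (\<Phi> t x) z < r"
  shows "\<exists>t\<^sub>1\<ge>0. \<forall>t\<ge>t\<^sub>1. \<Phi> t x = \<Phi> t\<^sub>1 x"
proof -
  obtain h\<^sub>0 where "0 < h\<^sub>0" and small:
    "\<forall>h\<in>{0..h\<^sub>0}. \<forall>p\<in>closure ((\<lambda>t. \<Phi> t x) ` {0..}). dist (\<Phi> h p) p < r"
    using semiflow_uniformly_small_time[OF assms(1,2,4)] by blast
  obtain t\<^sub>1 where "0 \<le> t\<^sub>1" and t\<^sub>1: "\<forall>t\<ge>t\<^sub>1. \<exists>z\<in>\<Sigma>. dist (\<Phi> t x) z < r"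
    using eventually_conj[OF near eventually_ge_at_top[of 0]] unfolding eventually_at_top_linorder
    by (metis order_refl)
  \<comment> \<open>The orbits of x and of its time-h shift stay close to each other, hence coincide.\<close>
  have step: "\<Phi> (t + h) x = \<Phi> t x" if "t\<^sub>1 \<le> t" "h \<in> {0..h\<^sub>0}" for t h
  proof -
    have shift: "\<Phi> t (\<Phi> h x) = \<Phi> h (\<Phi> t x)" if "0 \<le> t" for t
      using that \<open>h \<in> {0..h\<^sub>0}\<close> semiflow_add[OF assms(1)] by (metis add.commute atLeastAtMost_iff)
    have "\<Phi> t (\<Phi> h x) = \<Phi> t x"
    proof (rule expands_near_close_orbits_coincide[OF assms(1) expands \<open>0 \<le> t\<^sub>1\<close> _ \<open>t\<^sub>1 \<le> t\<close>], intro allI impI conjI)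
      fix s
      assume "t\<^sub>1 \<le> s"
      then show "\<exists>z\<in>\<Sigma>. dist (\<Phi> s x) z < r"
        using t\<^sub>1 by blast
      have "\<Phi> s x \<in> closure ((\<lambda>t. \<Phi> t x) ` {0..})"
        using \<open>0 \<le> t\<^sub>1\<close> \<open>t\<^sub>1 \<le> s\<close> by (intro closure_subset[THEN subsetD]) auto
      then show "norm (\<Phi> s (\<Phi> h x) - \<Phi> s x) < r"
        using small \<open>h \<in> {0..h\<^sub>0}\<close> shift \<open>0 \<le> t\<^sub>1\<close> \<open>t\<^sub>1 \<le> s\<close> by (simp add: dist_norm)
    qed simp
    then show ?thesis
      using semiflow_add[OF assms(1), of t h x] \<open>0 \<le> t\<^sub>1\<close> \<open>t\<^sub>1 \<le> t\<close> \<open>h \<in> {0..h\<^sub>0}\<close> by simp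
  qed
  have "\<Phi> t x = \<Phi> t\<^sub>1 x" if "t\<^sub>1 \<le> t" for t
  proof -
    obtain m :: nat where "(t - t\<^sub>1) / h\<^sub>0 \<le> m"
      using real_arch_simple by blast
    define n where "n = Suc m"
    have "(t - t\<^sub>1) / h\<^sub>0 \<le> n" and "0 < n"
      using \<open>(t - t\<^sub>1) / h\<^sub>0 \<le> m\<close> by (auto simp: n_def)
    define h where "h = (t - t\<^sub>1) / n"
    have "h \<in> {0..h\<^sub>0}"
      using \<open>(t - t\<^sub>1) / h\<^sub>0 \<le> n\<close> \<open>0 < n\<close> \<open>0 < h\<^sub>0\<close> that by (auto simp: h_def field_simps)
    have "\<Phi> (t\<^sub>1 + real j * h) x = \<Phi> t\<^sub>1 x" for j
    proof (induction j)
      case (Suc j)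
      have "t\<^sub>1 \<le> t\<^sub>1 + real j * h"
        using \<open>h \<in> {0..h\<^sub>0}\<close> by simp
      then show ?case
        using step[of "t\<^sub>1 + real j * h" h] \<open>h \<in> {0..h\<^sub>0}\<close> Suc.IH by (simp add: algebra_simps)
    qed simp
    from this[of n] show ?thesis
      using \<open>0 < n\<close> by (simp add: h_def)
  qed
  then show ?thesis
    using \<open>0 \<le> t\<^sub>1\<close> by blast
qed

lemma expands_near_UNIV_equilibrium:
  assumes "semiflow \<Phi>" and orbit: "compact (closure ((\<lambda>t. \<Phi> t x) ` {0..}))"
    and expands: "expands_near \<Phi> UNIV \<kappa> (omega_limit \<Phi> x) r" and "0 < r"
  shows "x \<in> omega_limit \<Phi> x" and "\<forall>t\<ge>0. \<Phi> t x = x"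
proof -
  have "\<forall>\<^sub>F t in at_top. \<exists>z\<in>omega_limit \<Phi> x. dist (\<Phi> t x) z < r"
    using eventually_near_omega_limit[of \<Phi> x, OF orbit \<open>0 < r\<close>] .
  then obtain t\<^sub>1 where "0 \<le> t\<^sub>1" and "\<forall>t\<ge>t\<^sub>1. \<Phi> t x = \<Phi> t\<^sub>1 x"
    using expands_near_UNIV_orbit_eventually_constant[of \<Phi> x, OF assms(1) orbit expands \<open>0 < r\<close>] by blast
  define e where "e = \<Phi> t\<^sub>1 x"
  have const: "\<Phi> t x = e" if "t\<^sub>1 \<le> t" for t
    using \<open>\<forall>t\<ge>t\<^sub>1. \<Phi> t x = \<Phi> t\<^sub>1 x\<close> that unfolding e_def by blast
  have equilibrium: "\<forall>t\<ge>0. \<Phi> t e = e"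
  proof (intro allI impI)
    fix t :: real
    assume "0 \<le> t"
    have "\<Phi> t e = \<Phi> (t + t\<^sub>1) x"
      using semiflow_add[OF assms(1) \<open>0 \<le> t\<close> \<open>0 \<le> t\<^sub>1\<close>] by (simp add: e_def)
    then show "\<Phi> t e = e"
      using const[of "t + t\<^sub>1"] \<open>0 \<le> t\<close> by simp
  qed
  have "filterlim (\<lambda>n. t\<^sub>1 + real n) at_top sequentially"
    using \<open>0 \<le> t\<^sub>1\<close> by (intro filterlim_at_top_mono[OF filterlim_real_sequentially] always_eventually) simp
  moreover have "(\<lambda>n. \<Phi> (t\<^sub>1 + real n) x) \<longlonglongrightarrow> e"
    using const by simp
  ultimately have "e \<in> omega_limit \<Phi> x"
    by (rule omega_limitI)
  then have "x = e"
    using expands_near_UNIV_equilibrium_unreachable[OF assms(1) expands \<open>0 < r\<close> _ equilibrium \<open>0 \<le> t\<^sub>1\<close>]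
    by (simp add: e_def)
  then show "x \<in> omega_limit \<Phi> x" and "\<forall>t\<ge>0. \<Phi> t x = x"
    using \<open>e \<in> omega_limit \<Phi> x\<close> equilibrium by simp_all
qed

lemma cone_eq_UNIV_if_zero_interior:
  fixes C :: "'a::real_normed_vector set"
  assumes "0 \<in> interior C" and cone: "\<forall>r x. x \<in> C \<longrightarrow> r *\<^sub>R x \<in> C"
  shows "C = UNIV"
proof -
  obtain \<epsilon> where "0 < \<epsilon>" and "ball 0 \<epsilon> \<subseteq> C"
    using assms(1) mem_interior by blast
  have "v \<in> C" for v
  proof (cases "v = 0")
    case True
    then show ?thesis
      using assms(1) interior_subset by blast
  next
    case False
    have "(\<epsilon> / 2) *\<^sub>R sgn v \<in> C"
      using \<open>ball 0 \<epsilon> \<subseteq> C\<close> \<open>0 < \<epsilon>\<close> False by (auto simp: norm_sgn)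
    then have "(2 * norm v / \<epsilon>) *\<^sub>R ((\<epsilon> / 2) *\<^sub>R sgn v) \<in> C"
      using cone by blast
    then show ?thesis
      using \<open>0 < \<epsilon>\<close> False by (simp add: sgn_div_norm)
  qed
  then show ?thesis
    by auto
qed

lemma orbits_do_not_merge:
  assumes "semiflow \<Phi>" and "strongly_monotone \<Phi> C" and cone: "\<forall>r x. x \<in> C \<longrightarrow> r *\<^sub>R x \<in> C"
    and orbit: "compact (closure ((\<lambda>t. \<Phi> t x) ` {0..}))"
    and expands: "expands_near \<Phi> C \<kappa> (omega_limit \<Phi> x) r" and "0 < r"
    and "y \<noteq> x" and "y - x \<in> C" and "0 \<le> t"
  shows "\<Phi> t y \<noteq> \<Phi> t x"
proof (cases "C = UNIV")
  case True
  then have expands_UNIV: "expands_near \<Phi> UNIV \<kappa> (omega_limit \<Phi> x) r"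
    using expands by simp
  note equilibrium = expands_near_UNIV_equilibrium[of \<Phi> x, OF assms(1) orbit expands_UNIV \<open>0 < r\<close>]
  show ?thesis
  proof
    assume "\<Phi> t y = \<Phi> t x"
    then have "\<Phi> t y = x"
      using equilibrium(2) \<open>0 \<le> t\<close> by simp
    then have "y = x"
      by (rule expands_near_UNIV_equilibrium_unreachable[OF assms(1) expands_UNIV \<open>0 < r\<close> equilibrium \<open>0 \<le> t\<close>])
    then show False
      using \<open>y \<noteq> x\<close> by simp
  qed
next
  case False
  show ?thesis
  proof (cases "t = 0")
    case True
    then show ?thesis
      using \<open>y \<noteq> x\<close> semiflow_zero[OF assms(1)] by simp
  next
    case False
    then have "\<Phi> t y - \<Phi> t x \<in> interior C"
      using assms(2) \<open>0 \<le> t\<close> \<open>y \<noteq> x\<close> \<open>y - x \<in> C\<close> unfolding strongly_monotone_def by simp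
    then show ?thesis
      using cone_eq_UNIV_if_zero_interior[OF _ cone] \<open>C \<noteq> UNIV\<close> by auto
  qed
qed

section \<open>Focusing and the main theorem\<close>

definition focusing_on ::
  "(real \<Rightarrow> 'a::real_normed_vector \<Rightarrow> 'a) \<Rightarrow> 'a set \<Rightarrow> 'a set \<Rightarrow> real \<Rightarrow> real \<Rightarrow> real \<Rightarrow> bool" where
  "focusing_on \<Phi> C \<Sigma> \<delta> T \<kappa> \<longleftrightarrow>
     (\<forall>z\<in>\<Sigma>. \<forall>x\<in>ball z \<delta>. \<forall>y\<in>ball z \<delta>.
        \<exists>L. linear L \<and> L (y - x) = \<Phi> T y - \<Phi> T x \<and>
          (\<exists>\<kappa>'>\<kappa>. \<forall>v\<in>L ` C. norm v = 1 \<longrightarrow> (\<forall>u. u \<notin> C \<longrightarrow> \<kappa>' \<le> norm (v - u))))"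

lemma focusing_on_mono:
  assumes "focusing_on \<Phi> C \<Sigma> \<delta> T \<kappa>" and "\<kappa>\<^sub>2 \<le> \<kappa>"
  shows "focusing_on \<Phi> C \<Sigma> \<delta> T \<kappa>\<^sub>2"
  unfolding focusing_on_def
proof (intro ballI)
  fix z x y
  assume "z \<in> \<Sigma>" "x \<in> ball z \<delta>" "y \<in> ball z \<delta>"
  then obtain L \<kappa>' where "linear L" "L (y - x) = \<Phi> T y - \<Phi> T x" "\<kappa> < \<kappa>'"
    and "\<forall>v\<in>L ` C. norm v = 1 \<longrightarrow> (\<forall>u. u \<notin> C \<longrightarrow> \<kappa>' \<le> norm (v - u))"
    using assms(1) unfolding focusing_on_def by blast
  then show "\<exists>L. linear L \<and> L (y - x) = \<Phi> T y - \<Phi> T x \<and>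
      (\<exists>\<kappa>'>\<kappa>\<^sub>2. \<forall>v\<in>L ` C. norm v = 1 \<longrightarrow> (\<forall>u. u \<notin> C \<longrightarrow> \<kappa>' \<le> norm (v - u)))"
    using assms(2) by (intro exI[of _ L] conjI exI[of _ \<kappa>']) auto
qed

lemma strongly_focusing_monotone_C1: "strongly_focusing_monotone \<Phi> D C \<Longrightarrow> C1_semiflow \<Phi> D"
  by (simp add: strongly_focusing_monotone_def)

lemma strongly_focusing_monotone_monotone: "strongly_focusing_monotone \<Phi> D C \<Longrightarrow> strongly_monotone \<Phi> C"
  by (simp add: strongly_focusing_monotone_def)

lemma strongly_focusing_monotone_focusing_on:
  assumes "strongly_focusing_monotone \<Phi> D C" and "compact \<Sigma>" and "invariant_set \<Phi> \<Sigma>"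
  shows "\<exists>\<delta> T \<kappa>. 0 < \<delta> \<and> 0 < T \<and> 0 < \<kappa> \<and> \<kappa> \<le> 1 \<and> focusing_on \<Phi> C \<Sigma> \<delta> T \<kappa>"
proof -
  have "\<forall>\<Sigma>. compact \<Sigma> \<and> invariant_set \<Phi> \<Sigma> \<longrightarrow> (\<exists>\<delta> T \<kappa>. 0 < \<delta> \<and> 0 < T \<and> 0 < \<kappa> \<and> focusing_on \<Phi> C \<Sigma> \<delta> T \<kappa>)"
    using assms(1) unfolding strongly_focusing_monotone_def focusing_on_def by (elim conjE) assumption
  then obtain \<delta> T \<kappa> where "0 < \<delta>" "0 < T" "0 < \<kappa>" "focusing_on \<Phi> C \<Sigma> \<delta> T \<kappa>"
    using assms(2,3) by blast
  then show ?thesis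
    using focusing_on_mono[of \<Phi> C \<Sigma> \<delta> T \<kappa> "min \<kappa> 1"] by (intro exI[of _ \<delta>] exI[of _ T] exI[of _ "min \<kappa> 1"]) simp
qed

lemma focusing_on_deep_in:
  assumes "semiflow \<Phi>" and "strongly_monotone \<Phi> C" and cone: "\<forall>r x. x \<in> C \<longrightarrow> r *\<^sub>R x \<in> C"
    and "focusing_on \<Phi> C \<Sigma> \<delta> T \<kappa>" and "0 \<le> T" and "0 \<le> s" and "y - x \<in> C"
    and "z \<in> \<Sigma>" and "dist (\<Phi> s x) z < \<delta>" and "dist (\<Phi> s y) z < \<delta>"
    and "\<Phi> (T + s) y \<noteq> \<Phi> (T + s) x"
  shows "deep_in C \<kappa> (\<Phi> (T + s) y - \<Phi> (T + s) x)"
proof -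
  define w where "w = \<Phi> (T + s) y - \<Phi> (T + s) x"
  have "\<Phi> s x \<in> ball z \<delta>" "\<Phi> s y \<in> ball z \<delta>"
    using assms(9,10) by (simp_all add: dist_commute)
  then obtain L \<kappa>' where "linear L" and L: "L (\<Phi> s y - \<Phi> s x) = \<Phi> T (\<Phi> s y) - \<Phi> T (\<Phi> s x)"
    and "\<kappa> < \<kappa>'" and far: "\<forall>v\<in>L ` C. norm v = 1 \<longrightarrow> (\<forall>u. u \<notin> C \<longrightarrow> \<kappa>' \<le> norm (v - u))"
    using assms(4) \<open>z \<in> \<Sigma>\<close> unfolding focusing_on_def by blast
  have "w \<noteq> 0"
    using assms(11) by (simp add: w_def)
  have "\<Phi> s y - \<Phi> s x \<in> C"
    using assms(2,6,7) unfolding strongly_monotone_def by blast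
  then have "(1 / norm w) *\<^sub>R (\<Phi> s y - \<Phi> s x) \<in> C"
    using cone by blast
  moreover have "sgn w = L ((1 / norm w) *\<^sub>R (\<Phi> s y - \<Phi> s x))"
    using L \<open>0 \<le> T\<close> \<open>0 \<le> s\<close>
    by (simp add: w_def sgn_div_norm linear_cmul[OF \<open>linear L\<close>] semiflow_add[OF assms(1)] divide_inverse_commute)
  ultimately have "sgn w \<in> L ` C"
    by blast
  moreover have "norm (sgn w) = 1"
    using \<open>w \<noteq> 0\<close> by (simp add: norm_sgn)
  ultimately have "ball (sgn w) \<kappa> \<subseteq> C"
    using far \<open>\<kappa> < \<kappa>'\<close> by (force simp: dist_norm)
  then show ?thesis
    using \<open>w \<noteq> 0\<close> by (simp add: deep_in_def w_def)
qed

lemma close_orbits_eventually_coincide: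
  assumes "semiflow \<Phi>" and "strongly_monotone \<Phi> C" and cone: "\<forall>r x. x \<in> C \<longrightarrow> r *\<^sub>R x \<in> C"
    and focusing: "focusing_on \<Phi> C \<Sigma> \<delta> T \<kappa>" and "0 < T"
    and expands: "expands_near \<Phi> C \<kappa> \<Sigma> r" and "y - x \<in> C"
    and close: "\<forall>\<^sub>F t in at_top. (\<exists>z\<in>\<Sigma>. dist (\<Phi> t x) z < min r (\<delta> / 2)) \<and> norm (\<Phi> t y - \<Phi> t x) < min r (\<delta> / 2)"
  shows "\<exists>t\<ge>0. \<Phi> t y = \<Phi> t x"
proof -
  obtain t\<^sub>0 where "0 \<le> t\<^sub>0" and close_t\<^sub>0: "\<And>t. t\<^sub>0 \<le> t \<Longrightarrow>
      (\<exists>z\<in>\<Sigma>. dist (\<Phi> t x) z < min r (\<delta> / 2)) \<and> norm (\<Phi> t y - \<Phi> t x) < min r (\<delta> / 2)"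
    using eventually_conj[OF close eventually_ge_at_top[of 0]] unfolding eventually_at_top_linorder
    by (metis order_refl)
  have close_deep: "\<forall>t\<ge>T + t\<^sub>0. (\<exists>z\<in>\<Sigma>. dist (\<Phi> t x) z < r) \<and> norm (\<Phi> t y - \<Phi> t x) < r \<and>
      (\<Phi> t y \<noteq> \<Phi> t x \<longrightarrow> deep_in C \<kappa> (\<Phi> t y - \<Phi> t x))"
  proof (intro allI impI conjI)
    fix t
    assume "T + t\<^sub>0 \<le> t"
    then show "\<exists>z\<in>\<Sigma>. dist (\<Phi> t x) z < r" and "norm (\<Phi> t y - \<Phi> t x) < r"
      using close_t\<^sub>0[of t] \<open>0 < T\<close> by auto
    assume "\<Phi> t y \<noteq> \<Phi> t x"
    have "t\<^sub>0 \<le> t - T"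
      using \<open>T + t\<^sub>0 \<le> t\<close> by simp
    then obtain z where "z \<in> \<Sigma>" and near: "dist (\<Phi> (t - T) x) z < \<delta> / 2"
      and close: "norm (\<Phi> (t - T) y - \<Phi> (t - T) x) < \<delta> / 2"
      using close_t\<^sub>0 by auto
    have "dist (\<Phi> (t - T) x) z < \<delta>"
      using near zero_le_dist[of "\<Phi> (t - T) x" z] by linarith
    moreover have "dist (\<Phi> (t - T) y) z < \<delta>"
      using dist_triangle[of "\<Phi> (t - T) y" z "\<Phi> (t - T) x"] near close by (simp add: dist_norm)
    ultimately show "deep_in C \<kappa> (\<Phi> t y - \<Phi> t x)"
      using focusing_on_deep_in[OF assms(1,2) cone focusing _ _ \<open>y - x \<in> C\<close> \<open>z \<in> \<Sigma>\<close>, of "t - T"]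
        \<open>0 < T\<close> \<open>0 \<le> t\<^sub>0\<close> \<open>t\<^sub>0 \<le> t - T\<close> \<open>\<Phi> t y \<noteq> \<Phi> t x\<close> by simp
  qed
  have "0 \<le> T + t\<^sub>0"
    using \<open>0 < T\<close> \<open>0 \<le> t\<^sub>0\<close> by simp
  then have "\<Phi> (T + t\<^sub>0) y = \<Phi> (T + t\<^sub>0) x"
    using expands_near_close_orbits_coincide[OF assms(1) expands _ close_deep order_refl] by blast
  then show ?thesis
    using \<open>0 < T\<close> \<open>0 \<le> t\<^sub>0\<close> by (intro exI[of _ "T + t\<^sub>0"]) simp
qed

theorem lemma4p2:
  fixes \<Phi> :: "real \<Rightarrow> 'a::banach \<Rightarrow> 'a"
    and D :: "real \<Rightarrow> 'a \<Rightarrow> 'a \<Rightarrow>\<^sub>L 'a"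
    and C :: "'a set" and k :: nat and x :: 'a
    and E F :: "'a \<Rightarrow> 'a set"
  assumes "k_cone C k" and "k_solid C k" and "complemented C k"
    and "semiflow \<Phi>"
    and "strongly_focusing_monotone \<Phi> D C"
    and "\<forall>t>0. \<forall>y. compact_operator (D t y)"
    and "\<forall>y. flow_extension \<Phi> (omega_limit \<Phi> y)"
    and "compact (closure ((\<lambda>t. \<Phi> t x) ` {0..}))"
    and "k_exp_separation \<Phi> D C k (omega_limit \<Phi> x) E F"
    and "\<forall>z\<in>omega_limit \<Phi> x. k_lyapunov D E z > 0"
  shows "\<exists>\<delta>''>0. \<forall>y. y \<noteq> x \<and> y - x \<in> C \<longrightarrow>
           Limsup at_top (\<lambda>t::real. ereal (norm (\<Phi> t y - \<Phi> t x))) \<ge> ereal \<delta>''"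
proof -
  define \<Omega> where "\<Omega> = omega_limit \<Phi> x"
  have "compact \<Omega>" and "invariant_set \<Phi> \<Omega>"
    using compact_omega_limit[of \<Phi> x, OF assms(8)] flow_extension_imp_invariant_set[OF assms(7)[rule_format, of x]]
    by (simp_all add: \<Omega>_def)
  then obtain \<delta> T \<kappa> where "0 < \<delta>" "0 < T" "0 < \<kappa>" "\<kappa> \<le> 1" and focusing: "focusing_on \<Phi> C \<Omega> \<delta> T \<kappa>"
    using strongly_focusing_monotone_focusing_on[OF assms(5)] by blast
  then have "\<forall>z\<in>\<Omega>. \<exists>T\<ge>1. \<exists>\<rho>>0. \<forall>p\<in>ball z \<rho>. \<forall>q\<in>ball z \<rho>.
      deep_in C \<kappa> (q - p) \<longrightarrow> 2 * norm (q - p) \<le> norm (\<Phi> T q - \<Phi> T p)"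
    using exp_separation_expands_near_point[OF strongly_focusing_monotone_C1[OF assms(5)] assms(9)] assms(10)
    by (simp add: \<Omega>_def)
  then obtain r where "0 < r" and expands: "expands_near \<Phi> C \<kappa> \<Omega> r"
    using compact_expands_near[OF \<open>compact \<Omega>\<close>] by blast
  have cone: "\<forall>r x. x \<in> C \<longrightarrow> r *\<^sub>R x \<in> C"
    using assms(1) by (simp add: k_cone_def)
  note monotone = strongly_focusing_monotone_monotone[OF assms(5)]
  define \<epsilon> where "\<epsilon> = min r (\<delta> / 2)"
  have "0 < \<epsilon>"
    using \<open>0 < r\<close> \<open>0 < \<delta>\<close> by (simp add: \<epsilon>_def)
  have "ereal \<epsilon> \<le> Limsup at_top (\<lambda>t. ereal (norm (\<Phi> t y - \<Phi> t x)))" if "y \<noteq> x" "y - x \<in> C" for y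
  proof (rule ccontr)
    assume "\<not> ?thesis"
    then have "\<forall>\<^sub>F t in at_top. (\<exists>z\<in>\<Omega>. dist (\<Phi> t x) z < \<epsilon>) \<and> norm (\<Phi> t y - \<Phi> t x) < \<epsilon>"
      using Limsup_lessD[of at_top "\<lambda>t. ereal (norm (\<Phi> t y - \<Phi> t x))" "ereal \<epsilon>"]
        eventually_conj[OF eventually_near_omega_limit[of \<Phi> x, OF assms(8) \<open>0 < \<epsilon>\<close>]]
      by (simp add: \<Omega>_def not_le)
    then obtain t where "0 \<le> t" "\<Phi> t y = \<Phi> t x"
      using close_orbits_eventually_coincide[OF assms(4) monotone cone focusing \<open>0 < T\<close> expands \<open>y - x \<in> C\<close>]
      unfolding \<epsilon>_def by blast
    then show False
      using orbits_do_not_merge[of \<Phi>, OF assms(4) monotone cone assms(8) _ \<open>0 < r\<close> that] expands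
      by (simp add: \<Omega>_def)
  qed
  then show ?thesis
    using \<open>0 < \<epsilon>\<close> by blast
qed

end
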